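(* Let $n\ge 2$ and $k\ge1$. Let $M$ be the $(k+1)\times(k+1)$ upper triangular matrix with $M(i,i)=k+1$ for all $i$, $M(i,j)=i$ for $i<j$, and $M(i,j)=0$ for $i>j$; let $I$ be the identity matrix of dimension $k+1$ and $N:=M-(k+1)I$. Then for any $l\in[k]$ and $i\in[k+1]$ with $i+l\le k+1$, $$N^{l}(i,i+l)=\frac{(i+l-1)!}{(i-1)!}.$$
   Context: For a matrix $A$, $A(i,j)$ denotes the entry in row $i$ and column $j$; $[k]=\{1,\dots,k\}$. *)

theory Defs
  imports "Jordan_Normal_Form.Matrix"
begin

(* Jordan_Normal_Form matrices are 0-indexed:
   entry (r,c) here corresponds to the paper's entry (r+1,c+1). *)
definition M_mat :: "nat \<Rightarrow> real mat" where
  "M_mat k = mat (k+1) (k+1)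
     (\<lambda>(r,c). if r = c then real (k+1) else if r < c then real (r+1) else 0)"

definition N_mat :: "nat \<Rightarrow> real mat" where
  "N_mat k = M_mat k - real (k+1) \<cdot>\<^sub>m 1\<^sub>m (k+1)"

end

theory Submission
  imports Defs
begin

text \<open>
  N is strictly upper triangular with superdiagonal entries N(j,j+1) = j.  For any strictly
  upper triangular matrix A, the power A^l vanishes below its l-th superdiagonal, and each
  entry of that superdiagonal is the product of the l consecutive superdiagonal entries of A
  it spans: in A^(l+1)(r,c) = \<Sum>j A^l(r,j) A(j,c) with c = r+l+1 only j = r+l survives.
  For N this product is i(i+1)...(i+l-1) = (i+l-1)!/(i-1)!.
\<close>

lemma pow_mat_strictly_upper_triangular_below_superdiag:
  fixes A :: "'a :: semiring_1 mat"
  assumes A: "A \<in> carrier_mat n n"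
    and strict: "\<And>i j. i < n \<Longrightarrow> j \<le> i \<Longrightarrow> A $$ (i, j) = 0"
    and "r < n" "c < n" "c < r + l"
  shows "(A ^\<^sub>m l) $$ (r, c) = 0"
  using assms(3-)
proof (induction l arbitrary: c)
  case 0
  then show ?case using A by simp
next
  case (Suc l)
  have "(A ^\<^sub>m l) $$ (r, j) * A $$ (j, c) = 0" if "j < n" for j
  proof (cases "j < r + l")
    case True
    then show ?thesis using Suc.IH Suc.prems that by simp
  next
    case False
    then show ?thesis using strict[of j c] Suc.prems that by simp
  qed
  then show ?case
    using A Suc.prems by (simp add: scalar_prod_def)
qed

lemma pow_mat_strictly_upper_triangular_superdiag:
  fixes A :: "'a :: comm_semiring_1 mat"
  assumes A: "A \<in> carrier_mat n n"
    and strict: "\<And>i j. i < n \<Longrightarrow> j \<le> i \<Longrightarrow> A $$ (i, j) = 0"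
    and "r + l < n"
  shows "(A ^\<^sub>m l) $$ (r, r + l) = (\<Prod>j<l. A $$ (r + j, r + j + 1))"
  using assms(3)
proof (induction l)
  case 0
  then show ?case using A by simp
next
  case (Suc l)
  let ?c = "r + Suc l"
  have other_terms_vanish: "(A ^\<^sub>m l) $$ (r, j) * A $$ (j, ?c) = 0"
    if "j < n" "j \<noteq> r + l" for j
  proof (cases "j < r + l")
    case True
    then show ?thesis
      using pow_mat_strictly_upper_triangular_below_superdiag[OF A strict] Suc.prems that by simp
  next
    case False
    then show ?thesis using strict[of j ?c] that by simp
  qed
  have "(A ^\<^sub>m Suc l) $$ (r, ?c) = (\<Sum>j<n. (A ^\<^sub>m l) $$ (r, j) * A $$ (j, ?c))"
    using A Suc.prems by (simp add: scalar_prod_def lessThan_atLeast0)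
  also have "\<dots> = (A ^\<^sub>m l) $$ (r, r + l) * A $$ (r + l, ?c)"
    using Suc.prems other_terms_vanish by (subst sum.remove[of _ "r + l"]) auto
  also have "\<dots> = (\<Prod>j<Suc l. A $$ (r + j, r + j + 1))"
    using Suc by simp
  finally show ?case .
qed

lemma N_mat_carrier: "N_mat k \<in> carrier_mat (k + 1) (k + 1)"
  unfolding N_mat_def M_mat_def by auto

lemma N_mat_entry:
  "r < k + 1 \<Longrightarrow> c < k + 1 \<Longrightarrow> N_mat k $$ (r, c) = (if r < c then real (r + 1) else 0)"
  unfolding N_mat_def M_mat_def by auto

lemma N_mat_pow_superdiag:
  assumes "r + l < k + 1"
  shows "(N_mat k ^\<^sub>m l) $$ (r, r + l) = fact (r + l) / fact r"
proof -
  have "(N_mat k ^\<^sub>m l) $$ (r, r + l) = (\<Prod>j<l. real r + 1 + of_nat j)"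
    using assms pow_mat_strictly_upper_triangular_superdiag[OF N_mat_carrier _ assms]
    by (simp add: N_mat_entry algebra_simps)
  also have "\<dots> = pochhammer (real r + 1) l"
    by (simp add: pochhammer_prod lessThan_atLeast0)
  also have "\<dots> = fact (r + l) / fact r"
    using pochhammer_product'[of "1 :: real" r l]
    by (simp add: pochhammer_fact[symmetric] add.commute)
  finally show ?thesis .
qed

theorem lemma3p8:
  fixes n k l i :: nat
  assumes "n \<ge> 2" and "k \<ge> 1"
    and "l \<in> {1..k}" and "i \<in> {1..k+1}" and "i + l \<le> k + 1"
  shows "(N_mat k ^\<^sub>m l) $$ (i - 1, i + l - 1) = fact (i + l - 1) / fact (i - 1)"
proof -
  have "i + l - 1 = (i - 1) + l" and "(i - 1) + l < k + 1"
    using assms(3-) by auto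
  then show ?thesis
    using N_mat_pow_superdiag by presburger
qed

end
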